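(* Let $G=Q_8=\{\pm E,\pm I,\pm J,\pm K\}$ be the quaternion group ($IJ=-JI=K$, $JK=-KJ=I$, $KI=-IK=J$, $IJK=-E$). Then the class semigroup $\mathcal C(\mathcal B(G),\mathcal F(G))$ has exactly $18$ elements.
   Context: For a finite group $G$ (multiplicative, identity $1_G$), $\mathcal F(G)$ is the free abelian monoid with basis $G$ (sequences $S=g_1\boldsymbol{\cdot}\ldots\boldsymbol{\cdot}g_\ell$, operation $\boldsymbol{\cdot}$ = concatenation). $\pi(S)=\{g_{\tau(1)}\cdots g_{\tau(\ell)}:\tau\text{ a permutation of }[1,\ell]\}$, $\pi$ of the empty sequence is $\{1_G\}$, and $\mathcal B(G)=\{S\in\mathcal F(G):1_G\in\pi(S)\}$. For $S,S'\in\mathcal F(G)$, $S\sim S'$ means: for all $T\in\mathcal F(G)$, $S\boldsymbol{\cdot}T\in\mathcal B(G)\iff S'\boldsymbol{\cdot}T\in\mathcal B(G)$; this is a congruence and the class semigroup $\mathcal C(\mathcal B(G),\mathcal F(G))$ is the set of its equivalence classes. *)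

theory Defs
  imports "HOL-Algebra.Group" "HOL-Library.Multiset"
begin

definition seqs :: "('a, 'b) monoid_scheme \<Rightarrow> 'a multiset set" where
  "seqs G = {S. set_mset S \<subseteq> carrier G}"

definition seq_prods :: "('a, 'b) monoid_scheme \<Rightarrow> 'a multiset \<Rightarrow> 'a set" where
  "seq_prods G S = {foldr (\<otimes>\<^bsub>G\<^esub>) xs \<one>\<^bsub>G\<^esub> | xs. mset xs = S}"

definition prod_one_seqs :: "('a, 'b) monoid_scheme \<Rightarrow> 'a multiset set" where
  "prod_one_seqs G = {S \<in> seqs G. \<one>\<^bsub>G\<^esub> \<in> seq_prods G S}"

definition class_rel :: "('a, 'b) monoid_scheme \<Rightarrow> ('a multiset \<times> 'a multiset) set" where
  "class_rel G = {(S, S'). S \<in> seqs G \<and> S' \<in> seqs G \<and>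
      (\<forall>T \<in> seqs G. (S + T \<in> prod_one_seqs G) \<longleftrightarrow> (S' + T \<in> prod_one_seqs G))}"

definition class_semigroup :: "('a, 'b) monoid_scheme \<Rightarrow> 'a multiset set set" where
  "class_semigroup G = seqs G // class_rel G"

datatype qunit = qE | qI | qJ | qK

text \<open>Product of units: (negative sign?, unit).\<close>
fun qunit_mult :: "qunit \<Rightarrow> qunit \<Rightarrow> bool \<times> qunit" where
  "qunit_mult qE x = (False, x)"
| "qunit_mult x qE = (False, x)"
| "qunit_mult qI qI = (True, qE)"
| "qunit_mult qJ qJ = (True, qE)"
| "qunit_mult qK qK = (True, qE)"
| "qunit_mult qI qJ = (False, qK)"
| "qunit_mult qJ qI = (True, qK)"
| "qunit_mult qJ qK = (False, qI)"
| "qunit_mult qK qJ = (True, qI)"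
| "qunit_mult qK qI = (False, qJ)"
| "qunit_mult qI qK = (True, qJ)"

text \<open>Elements of Q8: (s, u) represents -u if s, else u.\<close>
type_synonym q8 = "bool \<times> qunit"

definition q8_mult :: "q8 \<Rightarrow> q8 \<Rightarrow> q8" where
  "q8_mult a b = (let (s, u) = qunit_mult (snd a) (snd b) in ((fst a \<noteq> fst b) \<noteq> s, u))"

definition Q8 :: "q8 monoid" where
  "Q8 = \<lparr>carrier = UNIV, monoid.mult = q8_mult, monoid.one = (False, qE)\<rparr>"

end

theory Submission
  imports Defs
begin

text \<open>Modulo the centre {\<plusminus>E}, Q8 is the Klein four-group, so the unit part (E, I, J or K)
  of a product does not depend on the order of the factors; only the sign can.  If at most one
  of the axes I, J, K occurs in S, all terms commute and S has a single product.  If two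
  different axes occur, swapping two adjacent anticommuting terms flips the sign, so both signs
  occur and S is product-one iff its product lies in {\<plusminus>E}.  Hence whether S + T is product-one
  depends only on the invariants of S and T, namely ({I, J, K}, unit part of the product) if S
  contains two axes and (axes of S, product of S) otherwise.  The invariant takes 18 values,
  any two of which are told apart by some T, so the classes are exactly its 18 fibres.\<close>

lemma class_rel_eq_kernel:
  assumes prod_one_plus:
      "\<And>S T. S \<in> seqs G \<Longrightarrow> T \<in> seqs G \<Longrightarrow> S + T \<in> prod_one_seqs G \<longleftrightarrow> P (f S) (f T)"
    and separating: "\<And>S S'. S \<in> seqs G \<Longrightarrow> S' \<in> seqs G \<Longrightarrow>
      \<forall>T \<in> seqs G. P (f S) (f T) = P (f S') (f T) \<Longrightarrow> f S = f S'"
  shows "class_rel G = kernel f \<inter> seqs G \<times> seqs G"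
proof -
  have "(\<forall>T \<in> seqs G. S + T \<in> prod_one_seqs G \<longleftrightarrow> S' + T \<in> prod_one_seqs G) \<longleftrightarrow> f S = f S'"
    if "S \<in> seqs G" "S' \<in> seqs G" for S S'
    using that prod_one_plus separating by auto
  then show ?thesis
    unfolding class_rel_def kernel_def by auto
qed

lemma foldr_eq_foldr_neutral:
  assumes assoc: "\<And>x y z. f x (f y z) = f (f x y) z" and neutral: "\<And>x. f e x = x"
  shows "foldr f xs z = f (foldr f xs e) z"
  by (induction xs) (simp_all add: neutral assoc)

lemma foldr_perm_commuting:
  assumes assoc: "\<And>x y z. f x (f y z) = f (f x y) z"
    and perm: "mset xs = mset ys"
    and commute: "\<And>x y. x \<in> set xs \<Longrightarrow> y \<in> set xs \<Longrightarrow> f x y = f y x"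
  shows "foldr f xs z = foldr f ys z"
proof -
  have "List.fold f (rev xs) = List.fold f (rev ys)"
  proof (rule fold_multiset_equiv)
    show "f x \<circ> f y = f y \<circ> f x" if "x \<in> set (rev xs)" "y \<in> set (rev xs)" for x y
      using that commute by (auto simp: fun_eq_iff assoc)
  qed (use perm in simp)
  then show ?thesis
    by (simp add: foldr_conv_fold)
qed

definition klein_mult :: "qunit \<Rightarrow> qunit \<Rightarrow> qunit" where
  "klein_mult u v = snd (qunit_mult u v)"

lemma q8_mult_pair:
  "q8_mult (s, u) (t, v) = ((s \<noteq> t) \<noteq> fst (qunit_mult u v), klein_mult u v)"
  by (simp add: q8_mult_def klein_mult_def split: prod.split)

lemma snd_q8_mult: "snd (q8_mult x y) = klein_mult (snd x) (snd y)"
  by (cases x; cases y) (simp add: q8_mult_pair)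

lemma q8_mult_assoc: "q8_mult x (q8_mult y z) = q8_mult (q8_mult x y) z"
  by (cases x; cases y; cases z; rename_tac s u t v r w; case_tac u; case_tac v; case_tac w;
      simp add: q8_mult_pair klein_mult_def; argo)

lemma q8_mult_one_left: "q8_mult (False, qE) x = x"
  by (cases x) (simp add: q8_mult_def)

lemma klein_mult_assoc: "klein_mult u (klein_mult v w) = klein_mult (klein_mult u v) w"
  by (cases u; cases v; cases w; simp add: klein_mult_def)

lemma klein_mult_commute: "klein_mult u v = klein_mult v u"
  by (cases u; cases v; simp add: klein_mult_def)

lemma klein_mult_closed: "u \<in> {qE, X} \<Longrightarrow> v \<in> {qE, X} \<Longrightarrow> klein_mult u v \<in> {qE, X}"
  by (cases X; auto simp: klein_mult_def)

lemma q8_mult_commute_same_axis: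
  "snd x \<in> {qE, X} \<Longrightarrow> snd y \<in> {qE, X} \<Longrightarrow> q8_mult x y = q8_mult y x"
  by (cases x; cases y; rename_tac s u t v; case_tac u; case_tac v; case_tac X;
      simp add: q8_mult_pair klein_mult_def; argo)

lemma q8_mult_anticommute:
  assumes "snd x \<noteq> qE" "snd y \<noteq> qE" "snd x \<noteq> snd y"
  shows "q8_mult y (q8_mult x z) = (\<not> fst (q8_mult x (q8_mult y z)), snd (q8_mult x (q8_mult y z)))"
  using assms
  by (cases x; cases y; cases z; rename_tac s u t v r w; case_tac u; case_tac v; case_tac w;
      simp add: q8_mult_pair klein_mult_def; argo)

lemma snd_foldr_q8_mult: "snd (foldr q8_mult xs z) = foldr klein_mult (map snd xs) (snd z)"
  by (induction xs) (simp_all add: snd_q8_mult)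

lemma snd_foldr_q8_mult_perm:
  assumes "mset xs = mset ys"
  shows "snd (foldr q8_mult xs z) = snd (foldr q8_mult ys z)"
  unfolding snd_foldr_q8_mult
  by (rule foldr_perm_commuting[OF klein_mult_assoc]) (simp_all add: assms mset_map klein_mult_commute)

lemma foldr_q8_mult_append:
  "foldr q8_mult (xs @ ys) (False, qE) = q8_mult (foldr q8_mult xs (False, qE)) (foldr q8_mult ys (False, qE))"
  unfolding foldr_append by (rule foldr_eq_foldr_neutral[OF q8_mult_assoc q8_mult_one_left])

definition some_list :: "'a multiset \<Rightarrow> 'a list" where
  "some_list S = (SOME xs. mset xs = S)"

lemma mset_some_list [simp]: "mset (some_list S) = S"
  unfolding some_list_def by (rule someI_ex) (rule ex_mset)

definition seq_prod :: "q8 multiset \<Rightarrow> q8" where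
  "seq_prod S = foldr q8_mult (some_list S) (False, qE)"

lemma seqs_Q8: "seqs Q8 = UNIV"
  by (simp add: seqs_def Q8_def)

definition axes :: "q8 multiset \<Rightarrow> qunit set" where
  "axes S = snd ` set_mset S - {qE}"

lemma axes_plus: "axes (S + T) = axes S \<union> axes T"
  by (auto simp: axes_def)

lemma axes_subset: "axes S \<subseteq> {qI, qJ, qK}"
proof -
  have "u \<in> {qI, qJ, qK}" if "u \<noteq> qE" for u
    using that by (cases u) auto
  then show ?thesis
    by (auto simp: axes_def)
qed

lemma finite_axes [simp]: "finite (axes S)"
  using axes_subset by (rule finite_subset) simp

lemma snd_seq_prod: "mset xs = S \<Longrightarrow> snd (foldr q8_mult xs (False, qE)) = snd (seq_prod S)"
  unfolding seq_prod_def by (rule snd_foldr_q8_mult_perm) simp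

lemma snd_seq_prod_plus: "snd (seq_prod (S + T)) = snd (q8_mult (seq_prod S) (seq_prod T))"
proof -
  have "snd (seq_prod (S + T)) = snd (foldr q8_mult (some_list S @ some_list T) (False, qE))"
    by (rule snd_seq_prod[symmetric]) simp
  then show ?thesis
    by (simp only: foldr_q8_mult_append seq_prod_def)
qed

lemma single_axis:
  assumes "\<not> 2 \<le> card (axes S)"
  obtains X where "\<forall>g \<in># S. snd g \<in> {qE, X}"
proof -
  obtain X where "axes S \<subseteq> {X}"
    using assms card_le_Suc0_iff_eq[OF finite_axes, of S] by (cases "axes S = {}") auto
  then show ?thesis
    using that[of X] by (auto simp: axes_def)
qed

lemma seq_prod_single_axis:
  assumes "\<forall>g \<in># S. snd g \<in> {qE, X}" "mset xs = S"
  shows "foldr q8_mult xs (False, qE) = seq_prod S"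
  unfolding seq_prod_def
proof (rule foldr_perm_commuting[OF q8_mult_assoc])
  show "mset xs = mset (some_list S)"
    using assms(2) by simp
  show "q8_mult x y = q8_mult y x" if "x \<in> set xs" "y \<in> set xs" for x y
    using that assms by (intro q8_mult_commute_same_axis[of _ X]) auto
qed

lemma foldr_klein_mult_single_axis:
  "\<forall>u \<in> set us. u \<in> {qE, X} \<Longrightarrow> foldr klein_mult us qE \<in> {qE, X}"
proof (induction us)
  case (Cons u us)
  then show ?case
    using klein_mult_closed[of u X "foldr klein_mult us qE"] by simp
qed simp

lemma snd_seq_prod_single_axis:
  assumes "\<forall>g \<in># S. snd g \<in> {qE, X}"
  shows "snd (seq_prod S) \<in> {qE, X}"
proof -
  have "snd (seq_prod S) = foldr klein_mult (map snd (some_list S)) qE"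
    by (simp add: seq_prod_def snd_foldr_q8_mult)
  also have "\<dots> \<in> {qE, X}"
    using assms by (intro foldr_klein_mult_single_axis) (auto simp flip: set_mset_mset)
  finally show ?thesis .
qed

lemma two_axes_witness:
  assumes "2 \<le> card (axes S)"
  obtains a b rs where "mset (a # b # rs) = S" "snd a \<noteq> qE" "snd b \<noteq> qE" "snd a \<noteq> snd b"
proof -
  obtain u v where "u \<in> axes S" "v \<in> axes S" "u \<noteq> v"
    using assms card_le_Suc0_iff_eq[OF finite_axes, of S] by auto
  then obtain a b where ab: "a \<in># S" "b \<in># S" "snd a = u" "snd b = v" "u \<noteq> qE" "v \<noteq> qE"
    by (auto simp: axes_def)
  with \<open>u \<noteq> v\<close> have "b \<in># S - {#a#}"
    by (auto simp: in_diff_count)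
  then have "S = add_mset a (add_mset b (S - {#a#} - {#b#}))"
    using ab(1) by (metis insert_DiffM)
  then have "mset (a # b # some_list (S - {#a#} - {#b#})) = S"
    by simp
  then show ?thesis
    using that ab \<open>u \<noteq> v\<close> by blast
qed

lemma foldr_in_seq_prods_Q8: "mset xs = S \<Longrightarrow> foldr q8_mult xs (False, qE) \<in> seq_prods Q8 S"
  by (auto simp: seq_prods_def Q8_def)

lemma seq_prods_Q8_single_axis:
  assumes "\<not> 2 \<le> card (axes S)"
  shows "seq_prods Q8 S = {seq_prod S}"
proof -
  obtain X where X: "\<forall>g \<in># S. snd g \<in> {qE, X}"
    using single_axis[OF assms] .
  have "seq_prod S \<in> seq_prods Q8 S"
    unfolding seq_prod_def by (rule foldr_in_seq_prods_Q8) simp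
  moreover have "g = seq_prod S" if "g \<in> seq_prods Q8 S" for g
    using that seq_prod_single_axis[OF X] by (auto simp: seq_prods_def Q8_def)
  ultimately show ?thesis
    by blast
qed

text \<open>Swapping the first two terms of an ordering with two distinct axes flips the sign.\<close>

lemma seq_prods_Q8_two_axes:
  assumes "2 \<le> card (axes S)"
  shows "seq_prods Q8 S = {g. snd g = snd (seq_prod S)}"
proof (intro equalityI subsetI)
  fix g assume "g \<in> seq_prods Q8 S"
  then show "g \<in> {g. snd g = snd (seq_prod S)}"
    by (auto simp: seq_prods_def Q8_def snd_seq_prod)
next
  fix g :: q8 assume g: "g \<in> {g. snd g = snd (seq_prod S)}"
  obtain a b rs where ab: "mset (a # b # rs) = S" "snd a \<noteq> qE" "snd b \<noteq> qE" "snd a \<noteq> snd b"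
    using two_axes_witness[OF assms] .
  define p where "p = foldr q8_mult (a # b # rs) (False, qE)"
  have swapped: "foldr q8_mult (b # a # rs) (False, qE) = (\<not> fst p, snd p)"
    using q8_mult_anticommute[OF ab(2-4)] by (simp add: p_def)
  have "p \<in> seq_prods Q8 S"
    unfolding p_def by (rule foldr_in_seq_prods_Q8[OF ab(1)])
  moreover have "(\<not> fst p, snd p) \<in> seq_prods Q8 S"
    unfolding swapped[symmetric] by (rule foldr_in_seq_prods_Q8) (use ab(1) in \<open>simp add: add_mset_commute\<close>)
  moreover have "snd g = snd p"
    using g snd_seq_prod[OF ab(1)] by (simp add: p_def)
  then have "g = p \<or> g = (\<not> fst p, snd p)"
    by (cases g; cases p) auto
  ultimately show "g \<in> seq_prods Q8 S"
    by auto
qed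

lemma prod_one_seqs_Q8_iff:
  "S \<in> prod_one_seqs Q8 \<longleftrightarrow>
     (if 2 \<le> card (axes S) then snd (seq_prod S) = qE else seq_prod S = (False, qE))"
proof -
  have "S \<in> prod_one_seqs Q8 \<longleftrightarrow> (False, qE) \<in> seq_prods Q8 S"
    unfolding prod_one_seqs_def seqs_Q8 by (simp add: Q8_def)
  then show ?thesis
    by (cases "2 \<le> card (axes S)") (auto simp: seq_prods_Q8_single_axis seq_prods_Q8_two_axes)
qed

lemma seq_prod_plus_single_axis:
  assumes "\<not> 2 \<le> card (axes (S + T))"
  shows "seq_prod (S + T) = q8_mult (seq_prod S) (seq_prod T)"
proof -
  obtain X where "\<forall>g \<in># S + T. snd g \<in> {qE, X}"
    using single_axis[OF assms] .
  then have "seq_prod (S + T) = foldr q8_mult (some_list S @ some_list T) (False, qE)"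
    by (intro seq_prod_single_axis[symmetric]) simp_all
  then show ?thesis
    by (simp only: foldr_q8_mult_append seq_prod_def)
qed

definition class_invariant :: "q8 multiset \<Rightarrow> qunit set \<times> q8" where
  "class_invariant S = (if 2 \<le> card (axes S) then ({qI, qJ, qK}, (False, snd (seq_prod S)))
                        else (axes S, seq_prod S))"

definition invariant_prod_one :: "qunit set \<times> q8 \<Rightarrow> qunit set \<times> q8 \<Rightarrow> bool" where
  "invariant_prod_one a b = (if 2 \<le> card (fst a \<union> fst b) then snd (q8_mult (snd a) (snd b)) = qE
                            else q8_mult (snd a) (snd b) = (False, qE))"

lemma card_axes_plus_ge:
  "card (axes S) \<le> card (axes (S + T)) \<and> card (axes T) \<le> card (axes (S + T))"
  unfolding axes_plus by (simp add: card_mono)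

lemma two_axes_plus_iff:
  "2 \<le> card (fst (class_invariant S) \<union> fst (class_invariant T)) \<longleftrightarrow> 2 \<le> card (axes (S + T))"
proof (cases "2 \<le> card (axes S) \<or> 2 \<le> card (axes T)")
  case True
  then have "fst (class_invariant S) \<union> fst (class_invariant T) = {qI, qJ, qK}"
    using axes_subset[of S] axes_subset[of T] by (auto simp: class_invariant_def)
  moreover have "2 \<le> card (axes (S + T))"
    using True card_axes_plus_ge[of S T] by linarith
  ultimately show ?thesis
    by simp
next
  case False
  then show ?thesis
    by (simp add: class_invariant_def axes_plus)
qed

lemma snd_snd_class_invariant: "snd (snd (class_invariant S)) = snd (seq_prod S)"
  by (simp add: class_invariant_def)

lemma prod_one_plus_Q8_iff:
  "S + T \<in> prod_one_seqs Q8 \<longleftrightarrow> invariant_prod_one (class_invariant S) (class_invariant T)"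
proof (cases "2 \<le> card (axes (S + T))")
  case True
  then show ?thesis
    using two_axes_plus_iff[of S T]
    by (simp add: prod_one_seqs_Q8_iff invariant_prod_one_def snd_seq_prod_plus snd_q8_mult
        snd_snd_class_invariant)
next
  case False
  then have "\<not> 2 \<le> card (axes S)" "\<not> 2 \<le> card (axes T)"
    using card_axes_plus_ge[of S T] by linarith+
  then show ?thesis
    using False two_axes_plus_iff[of S T] seq_prod_plus_single_axis[of S T]
    by (simp add: prod_one_seqs_Q8_iff invariant_prod_one_def class_invariant_def)
qed

lemma class_invariant_mset:
  "class_invariant (mset xs) =
     (if 2 \<le> card (axes (mset xs)) then ({qI, qJ, qK}, (False, snd (foldr q8_mult xs (False, qE))))
      else (axes (mset xs), foldr q8_mult xs (False, qE)))"
proof (cases "2 \<le> card (axes (mset xs))")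
  case True
  then show ?thesis
    by (simp add: class_invariant_def snd_seq_prod)
next
  case False
  then obtain X where "\<forall>g \<in># mset xs. snd g \<in> {qE, X}"
    using single_axis by blast
  then show ?thesis
    using False seq_prod_single_axis[of "mset xs" X xs] by (simp add: class_invariant_def)
qed

definition invariant_values :: "(qunit set \<times> q8) list" where
  "invariant_values =
    [({qI, qJ, qK}, (False, qE)), ({qI, qJ, qK}, (False, qI)),
     ({qI, qJ, qK}, (False, qJ)), ({qI, qJ, qK}, (False, qK)),
     ({}, (False, qE)), ({}, (True, qE)),
     ({qI}, (False, qE)), ({qI}, (True, qE)), ({qI}, (False, qI)), ({qI}, (True, qI)),
     ({qJ}, (False, qE)), ({qJ}, (True, qE)), ({qJ}, (False, qJ)), ({qJ}, (True, qJ)),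
     ({qK}, (False, qE)), ({qK}, (True, qE)), ({qK}, (False, qK)), ({qK}, (True, qK))]"

lemma distinct_invariant_values: "distinct invariant_values"
  by (simp add: invariant_values_def)

lemma length_invariant_values: "length invariant_values = 18"
  by (simp add: invariant_values_def)

lemma class_invariant_in_values: "class_invariant S \<in> set invariant_values"
proof -
  obtain s w where prod: "seq_prod S = (s, w)"
    by fastforce
  have "axes S = {} \<or> (\<exists>X. axes S = {X})" if "\<not> 2 \<le> card (axes S)"
  proof -
    have "card (axes S) = 0 \<or> card (axes S) = 1"
      using that by linarith
    then show ?thesis
      by (metis card_0_eq card_1_singletonE finite_axes)
  qed
  then consider "2 \<le> card (axes S)" | "axes S = {}" | X where "axes S = {X}"
    by blast
  then show ?thesis
  proof cases
    case 1
    then show ?thesis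
      using prod by (cases w) (simp_all add: class_invariant_def invariant_values_def)
  next
    case 2
    then have "\<forall>g \<in># S. snd g \<in> {qE, qE}"
      by (auto simp: axes_def)
    then have "w = qE"
      using snd_seq_prod_single_axis prod by fastforce
    then show ?thesis
      using 2 prod by (cases s) (simp_all add: class_invariant_def invariant_values_def)
  next
    case (3 X)
    then have "\<forall>g \<in># S. snd g \<in> {qE, X}" "X \<in> {qI, qJ, qK}"
      using axes_subset[of S] by (auto simp: axes_def)
    then have "w \<in> {qE, X}"
      using snd_seq_prod_single_axis prod by fastforce
    then show ?thesis
      using 3 prod \<open>X \<in> {qI, qJ, qK}\<close>
      by (cases s) (auto simp: class_invariant_def invariant_values_def)
  qed
qed

lemma range_class_invariant: "range class_invariant = set invariant_values"
proof
  show "range class_invariant \<subseteq> set invariant_values"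
    using class_invariant_in_values by auto
  let ?witnesses = "[[(False, qI), (False, qJ), (False, qK)], [(False, qJ), (False, qK)],
    [(False, qK), (False, qI)], [(False, qI), (False, qJ)], [], [(True, qE)],
    [(False, qI), (True, qI)], [(False, qI), (False, qI)], [(False, qI)], [(True, qI)],
    [(False, qJ), (True, qJ)], [(False, qJ), (False, qJ)], [(False, qJ)], [(True, qJ)],
    [(False, qK), (True, qK)], [(False, qK), (False, qK)], [(False, qK)], [(True, qK)]]"
  have "map (\<lambda>xs. class_invariant (mset xs)) ?witnesses = invariant_values"
    by (simp add: class_invariant_mset axes_def del: mset.simps)
       (simp add: invariant_values_def card_insert_if q8_mult_pair klein_mult_def)
  moreover have "set (map (\<lambda>xs. class_invariant (mset xs)) ws) \<subseteq> range class_invariant" for ws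
    by auto
  ultimately show "set invariant_values \<subseteq> range class_invariant"
    by metis
qed

lemma invariant_prod_one_separates:
  "inj_on (\<lambda>a. map (invariant_prod_one a) invariant_values) (set invariant_values)"
proof -
  have "distinct (map (\<lambda>a. map (invariant_prod_one a) invariant_values) invariant_values)"
    by (simp add: invariant_values_def invariant_prod_one_def q8_mult_pair klein_mult_def
        card_insert_if)
  then show ?thesis
    by (simp add: distinct_map)
qed

lemma class_invariant_eq_if_same_tests:
  assumes same_tests: "\<forall>T. invariant_prod_one (class_invariant S) (class_invariant T) =
                          invariant_prod_one (class_invariant S') (class_invariant T)"
  shows "class_invariant S = class_invariant S'"
proof -
  have "invariant_prod_one (class_invariant S) b = invariant_prod_one (class_invariant S') b"
    if "b \<in> set invariant_values" for b
  proof -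
    obtain T where "b = class_invariant T"
      using \<open>b \<in> set invariant_values\<close> by (metis range_class_invariant rangeE)
    then show ?thesis
      using same_tests by blast
  qed
  then have "map (invariant_prod_one (class_invariant S)) invariant_values =
             map (invariant_prod_one (class_invariant S')) invariant_values"
    by (simp add: map_eq_conv)
  then show ?thesis
    using invariant_prod_one_separates class_invariant_in_values by (meson inj_onD)
qed

lemma class_rel_Q8: "class_rel Q8 = kernel class_invariant"
proof -
  have "class_rel Q8 = kernel class_invariant \<inter> seqs Q8 \<times> seqs Q8"
  proof (rule class_rel_eq_kernel[where P = invariant_prod_one])
    show "S + T \<in> prod_one_seqs Q8 \<longleftrightarrow> invariant_prod_one (class_invariant S) (class_invariant T)"
      for S T
      by (rule prod_one_plus_Q8_iff)
    show "class_invariant S = class_invariant S'"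
      if "\<forall>T \<in> seqs Q8. invariant_prod_one (class_invariant S) (class_invariant T) =
                          invariant_prod_one (class_invariant S') (class_invariant T)" for S S'
      using that by (intro class_invariant_eq_if_same_tests) (simp add: seqs_Q8)
  qed
  then show ?thesis
    by (simp add: seqs_Q8)
qed

theorem mainTheorem10:
  shows "card (class_semigroup Q8) = 18"
proof -
  have "class_semigroup Q8 = UNIV // kernel class_invariant"
    unfolding class_semigroup_def class_rel_Q8 seqs_Q8 ..
  then have "card (class_semigroup Q8) = card (range class_invariant)"
    using bij_betw_same_card[OF bij_betw_image_quotient_kernel[of class_invariant UNIV]] by simp
  also have "\<dots> = 18"
    by (simp add: range_class_invariant distinct_card distinct_invariant_values
        length_invariant_values)
  finally show ?thesis .
qed

end
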